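(* For a positive integer $N$, let $\mathcal S_4$ be the set of pairs $(A,B)$ of $3\times 3$ matrices with entries in $[-N,N]\cap\mathbb{Z}$, written \[ A = \begin{pmatrix} a_1 & a_2 & a_3 \\ a_4 & a_5 & a_6 \\ a_7 & a_8 & a_9 \end{pmatrix},\qquad B = \begin{pmatrix} b_1 & b_2 & b_3 \\ b_4 & b_5 & b_6 \\ b_7 & b_8 & b_9 \end{pmatrix}, \] such that $AB=BA$ and the $6\times 4$ matrix \[ M = \begin{pmatrix} -b_2 & a_2 & 0 & 0 \\ b_4 & -a_4 & 0 & 0 \\ 0 & 0 & -b_3 & a_3 \\ 0 & 0 & b_7 & -a_7 \\ b_8 & -a_8 & -b_8 & a_8 \\ -b_6 & a_6 & b_6 & -a_6 \end{pmatrix} \] has rank $4$. Then $|\mathcal S_4|\le CN^{10}$ for an absolute constant $C>0$ and all $N\ge 1$. *)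

theory Defs
  imports "HOL-Analysis.Analysis"
begin

definition ent :: "int^3^3 \<Rightarrow> nat \<Rightarrow> int" where
  "ent A k = A $ (of_nat ((k - 1) div 3 + 1)) $ (of_nat ((k - 1) mod 3 + 1))"

definition Mmat :: "int^3^3 \<Rightarrow> int^3^3 \<Rightarrow> real^4^6" where
  "Mmat A B = (let a = (\<lambda>k. real_of_int (ent A k)); b = (\<lambda>k. real_of_int (ent B k)) in
     vector [
       vector [- b 2, a 2, 0, 0],
       vector [b 4, - a 4, 0, 0],
       vector [0, 0, - b 3, a 3],
       vector [0, 0, b 7, - a 7],
       vector [b 8, - a 8, - b 8, a 8],
       vector [- b 6, a 6, b 6, - a 6]])"

definition S4 :: "int \<Rightarrow> ((int^3^3) \<times> (int^3^3)) set" where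
  "S4 N = {p. let A = fst p; B = snd p in
                 (\<forall>i j. \<bar>A $ i $ j\<bar> \<le> N \<and> \<bar>B $ i $ j\<bar> \<le> N)
                 \<and> A ** B = B ** A \<and> rank (Mmat A B) = 4}"

end

theory Submission
  imports Defs
begin

text \<open>
  Commutativity of A and B is a linear system M u = r in the diagonal differences
  u = (a1 - a5, b1 - b5, a1 - a9, b1 - b9), whose right-hand side r is quadratic in the
  off-diagonal entries. As M has full column rank, (A, B) is determined by a1, b1 and the
  three pairs of integer vectors ((a2, b2), (a4, b4)), ((a6, b6), (a8, b8)), ((a3, b3), (a7, b7)),
  and the diagonal entries of AB = BA say that the 2x2 determinants of these pairs are t, t
  and -t for one t with |t| <= 2 N^2.

  For a fixed nonzero v in [-N, N]^2 the solutions w of det(v, w) = t lie on a line; there are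
  O(N gcd(v) / height(v)) of them, height(v) being the larger of the absolute values of the
  coordinates, and none unless gcd(v) divides t. Summing over v, the number of
  pairs with determinant t is O(N^2 (1 + F(t))), where F(t) is the sum of 1/d over the divisors
  d <= N of t. The sum of F(t)^3 over |t| <= 2 N^2 is O(N^2): d1, d2, d3 have O(N^2 / max d_i)
  common multiples in that range, and 1 / (d1 d2 d3 max d_i) <= (d1 d2 d3)^(-4/3) is summable.
  Hence |S4| <= O(N^2) * sum_t O(N^6) (1 + F(t)^3) = O(N^10).
\<close>

section \<open>Lattice points with prescribed determinant\<close>

definition grid :: "int \<Rightarrow> (int \<times> int) set" where
  "grid N = {-N..N} \<times> {-N..N}"

lemma finite_grid [simp]: "finite (grid N)"
  by (simp add: grid_def)

lemma swap_in_grid_iff [simp]: "prod.swap w \<in> grid N \<longleftrightarrow> w \<in> grid N"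
  by (cases w) (auto simp: grid_def)

lemma finite_int_interval_filter [simp]: "finite {x :: int. a \<le> x \<and> x \<le> b \<and> P x}"
  by (rule finite_subset[of _ "{a..b}"]) auto

lemma card_grid: "N \<ge> 0 \<Longrightarrow> real (card (grid N)) = (2 * real_of_int N + 1) ^ 2"
  by (simp add: grid_def card_cartesian_product power2_eq_square)

lemma card_grid_le:
  assumes "N \<ge> 1"
  shows "real (card (grid N)) \<le> 9 * real_of_int N ^ 2"
proof -
  have "0 \<le> (5 * real_of_int N + 1) * (real_of_int N - 1)" using assms by simp
  then show ?thesis using assms by (simp add: card_grid power2_eq_square algebra_simps)
qed

lemma card_congruent_le:
  fixes k L x0 :: int
  assumes k: "k \<ge> 1" and L: "L \<ge> 0"
  shows "real (card {x \<in> {-L..L}. k dvd x - x0}) \<le> 2 * L / k + 1"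
proof -
  let ?S = "{x \<in> {-L..L}. k dvd x - x0}"
  define lo where "lo = \<lceil>real_of_int (-L - x0) / k\<rceil>"
  define hi where "hi = \<lfloor>real_of_int (L - x0) / k\<rfloor>"
  have kpos: "real_of_int k > 0" using k by simp
  have inj: "inj_on (\<lambda>x. (x - x0) div k) ?S"
  proof (rule inj_onI)
    fix x y assume "x \<in> ?S" "y \<in> ?S" "(x - x0) div k = (y - x0) div k"
    then have "x - x0 = y - x0" by (metis (no_types, lifting) dvd_mult_div_cancel mem_Collect_eq)
    then show "x = y" by simp
  qed
  have image: "(\<lambda>x. (x - x0) div k) ` ?S \<subseteq> {lo..hi}"
  proof clarify
    fix x assume x: "x \<in> {-L..L}" "k dvd x - x0"
    define q where "q = (x - x0) div k"
    have "x - x0 = k * q" using x(2) by (simp add: q_def)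
    then have "real_of_int (-L - x0) \<le> k * q" "k * q \<le> real_of_int (L - x0)"
      using x(1) by (simp_all flip: of_int_mult)
    then have "real_of_int (-L - x0) / k \<le> q" "q \<le> real_of_int (L - x0) / k"
      using kpos by (simp_all add: divide_le_eq le_divide_eq mult.commute)
    then show "q \<in> {lo..hi}" by (simp add: lo_def hi_def ceiling_le_iff le_floor_iff)
  qed
  have "card ?S = card ((\<lambda>x. (x - x0) div k) ` ?S)" using inj by (simp add: card_image)
  also have "\<dots> \<le> card {lo..hi}" using image by (intro card_mono) auto
  finally have card_le: "real (card ?S) \<le> real (nat (hi - lo + 1))" by simp
  have "real_of_int hi - real_of_int lo \<le> 2 * L / k"
  proof -
    have "real_of_int hi \<le> real_of_int (L - x0) / k" "real_of_int (-L - x0) / k \<le> real_of_int lo"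
      unfolding hi_def lo_def by (rule of_int_floor_le, rule le_of_int_ceiling)
    then have "real_of_int hi - real_of_int lo \<le> real_of_int (L - x0) / k - real_of_int (-L - x0) / k"
      by linarith
    also have "\<dots> = 2 * L / k" using kpos by (simp add: field_simps)
    finally show ?thesis .
  qed
  moreover have "2 * L / k \<ge> 0" using kpos L by simp
  ultimately have "real (nat (hi - lo + 1)) \<le> 2 * L / k + 1" by (cases "hi - lo + 1 \<ge> 0") auto
  with card_le show ?thesis by linarith
qed

lemma card_multiples_le:
  fixes d L :: int
  assumes "1 \<le> d" "d \<le> L"
  shows "real (card {x \<in> {-L..L}. d dvd x}) \<le> 3 * L / d"
proof -
  have "real (card {x \<in> {-L..L}. d dvd x}) \<le> 2 * L / d + 1"
    using card_congruent_le[of d L 0] assms by simp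
  moreover have "1 \<le> real_of_int L / d" using assms by simp
  moreover have "real_of_int (3 * L) / d = real_of_int (2 * L) / d + real_of_int L / d"
    by (simp add: add_divide_distrib[symmetric])
  ultimately show ?thesis by linarith
qed

definition det2 :: "int \<times> int \<Rightarrow> int \<times> int \<Rightarrow> int" where
  "det2 v w = fst v * snd w - snd v * fst w"

lemma gcd_dvd_det2: "gcd a b dvd det2 (a, b) w"
  by (simp add: det2_def)

definition height :: "int \<times> int \<Rightarrow> int" where
  "height v = max \<bar>fst v\<bar> \<bar>snd v\<bar>"

lemma height_nonneg [simp]: "0 \<le> height v"
  by (simp add: height_def)

lemma height_swap [simp]: "height (prod.swap v) = height v"
  by (simp add: height_def)

lemma height_le: "v \<in> grid N \<Longrightarrow> height v \<le> N"
  by (auto simp: grid_def height_def)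

lemma gcd_le_height:
  assumes "v \<noteq> (0, 0)"
  shows "gcd (fst v) (snd v) \<le> height v"
proof (cases "fst v = 0")
  case True
  then show ?thesis by (simp add: height_def)
next
  case False
  then have "gcd (fst v) (snd v) \<le> \<bar>fst v\<bar>" using dvd_imp_le_int[of "fst v" "gcd (fst v) (snd v)"] by auto
  then show ?thesis by (simp add: height_def)
qed

lemma det2_eq_imp_fst_congruent:
  assumes "det2 (p, q) w = t" "det2 (p, q) w0 = t" "p \<noteq> 0"
  shows "p div gcd p q dvd fst w - fst w0"
proof -
  define g where "g = gcd p q"
  have g: "g > 0" "g dvd p" "g dvd q" using assms(3) by (auto simp: g_def)
  have "p * (snd w - snd w0) = q * (fst w - fst w0)"
    using assms(1,2) by (simp add: det2_def algebra_simps)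
  moreover obtain p' q' where "p = g * p'" "q = g * q'" using g by (auto elim!: dvdE)
  ultimately have "p div g * (snd w - snd w0) = q div g * (fst w - fst w0)"
    using g by (simp add: mult.assoc)
  then have "p div g dvd q div g * (fst w - fst w0)" by (metis dvd_triv_left)
  moreover have "coprime (p div g) (q div g)" using assms(3) by (simp add: g_def div_gcd_coprime)
  ultimately show ?thesis by (simp add: g_def coprime_dvd_mult_right_iff)
qed

lemma card_det2_le_fst:
  assumes p: "fst v \<noteq> 0" and N: "N \<ge> 0"
  shows "real (card {w \<in> grid N. det2 v w = t}) \<le> 2 * N * gcd (fst v) (snd v) / real_of_int \<bar>fst v\<bar> + 1"
proof (cases "{w \<in> grid N. det2 v w = t} = {}")
  case True
  show ?thesis unfolding True using N by simp
next
  case False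
  let ?S = "{w \<in> grid N. det2 v w = t}"
  obtain p q where v: "v = (p, q)" by fastforce
  define g where "g = gcd p q"
  define k where "k = \<bar>p\<bar> div g"
  from False obtain w0 where w0: "w0 \<in> ?S" by blast
  have g: "g > 0" "g dvd p" using p v by (auto simp: g_def)
  have pk: "\<bar>p\<bar> = k * g" using g by (simp add: k_def)
  then have "k * g > 0" using p v by simp
  then have k: "k \<ge> 1" using g by (simp add: zero_less_mult_iff)
  have inj: "inj_on fst ?S"
  proof (rule inj_onI)
    fix w w' assume "w \<in> ?S" "w' \<in> ?S" "fst w = fst w'"
    then have "p * snd w = p * snd w'" by (auto simp: v det2_def)
    then show "w = w'" using p v \<open>fst w = fst w'\<close> by (simp add: prod_eq_iff)
  qed
  have "k = \<bar>p div g\<bar>" using g by (simp add: k_def abs_div)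
  then have image: "fst ` ?S \<subseteq> {x \<in> {-N..N}. k dvd x - fst w0}"
    using w0 p det2_eq_imp_fst_congruent[of p q _ t w0] by (auto simp: v g_def grid_def)
  have "card ?S = card (fst ` ?S)" using inj by (simp add: card_image)
  also have "\<dots> \<le> card {x \<in> {-N..N}. k dvd x - fst w0}" using image by (intro card_mono) auto
  finally have "real (card ?S) \<le> 2 * N / k + 1"
    using card_congruent_le[OF k N, of "fst w0"] by linarith
  also have "2 * N / k = 2 * N * g / \<bar>p\<bar>" using pk g by (simp add: field_simps)
  finally show ?thesis by (simp add: v g_def)
qed

lemma card_det2_le:
  assumes v: "v \<noteq> (0, 0)" and N: "N \<ge> 0"
  shows "real (card {w \<in> grid N. det2 v w = t}) \<le> 2 * N * gcd (fst v) (snd v) / height v + 1"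
proof (cases "\<bar>snd v\<bar> \<le> \<bar>fst v\<bar>")
  case True
  then have "fst v \<noteq> 0" "height v = \<bar>fst v\<bar>" using v by (auto simp: height_def prod_eq_iff)
  then show ?thesis using card_det2_le_fst N by simp
next
  case False
  let ?u = "prod.swap v"
  have "{w \<in> grid N. det2 ?u w = - t} = prod.swap ` {w \<in> grid N. det2 v w = t}"
  proof (intro equalityI subsetI)
    fix w assume "w \<in> {w \<in> grid N. det2 ?u w = - t}"
    then show "w \<in> prod.swap ` {w \<in> grid N. det2 v w = t}"
      by (intro image_eqI[of _ _ "prod.swap w"]) (auto simp: det2_def)
  qed (auto simp: det2_def grid_def)
  then have "card {w \<in> grid N. det2 v w = t} = card {w \<in> grid N. det2 ?u w = - t}"
    by (simp add: card_image)
  moreover have "fst ?u \<noteq> 0" "height v = \<bar>fst ?u\<bar>" using False by (auto simp: height_def)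
  ultimately show ?thesis using card_det2_le_fst[of ?u N "- t"] N by (simp add: gcd.commute)
qed

lemma sum_inverse_abs_fst_le:
  fixes d N :: int
  assumes d: "1 \<le> d" "d \<le> N"
  shows "(\<Sum>v\<in>{v \<in> grid N. fst v \<noteq> 0 \<and> \<bar>snd v\<bar> \<le> \<bar>fst v\<bar> \<and> d dvd fst v \<and> d dvd snd v}.
           1 / real_of_int \<bar>fst v\<bar>) \<le> 9 * N / d ^ 2"
proof -
  define X where "X = {x \<in> {-N..N}. x \<noteq> 0 \<and> d dvd x}"
  define Y where "Y x = {y \<in> {-N..N}. \<bar>y\<bar> \<le> \<bar>x\<bar> \<and> d dvd y}" for x
  have "{v \<in> grid N. fst v \<noteq> 0 \<and> \<bar>snd v\<bar> \<le> \<bar>fst v\<bar> \<and> d dvd fst v \<and> d dvd snd v} = Sigma X Y"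
    by (auto simp: grid_def X_def Y_def)
  moreover have "finite X" "\<forall>x\<in>X. finite (Y x)"
    by (auto simp: X_def Y_def intro: finite_subset[of _ "{-N..N}"])
  ultimately have "(\<Sum>v\<in>{v \<in> grid N. fst v \<noteq> 0 \<and> \<bar>snd v\<bar> \<le> \<bar>fst v\<bar> \<and> d dvd fst v \<and> d dvd snd v}.
           1 / real_of_int \<bar>fst v\<bar>) = (\<Sum>x\<in>X. \<Sum>y\<in>Y x. 1 / real_of_int \<bar>x\<bar>)"
    using sum.Sigma[of X Y "\<lambda>x y. 1 / real_of_int \<bar>x\<bar>"] by (simp add: split_def)
  also have "\<dots> = (\<Sum>x\<in>X. real (card (Y x)) / \<bar>x\<bar>)"
    by simp
  also have "\<dots> \<le> (\<Sum>x\<in>X. 3 / d)"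
  proof (rule sum_mono)
    fix x assume x: "x \<in> X"
    then have "d \<le> \<bar>x\<bar>" using dvd_imp_le_int[of x d] by (auto simp: X_def)
    then have "real (card {y \<in> {-\<bar>x\<bar>..\<bar>x\<bar>}. d dvd y}) \<le> 3 * \<bar>x\<bar> / d"
      using card_multiples_le[of d "\<bar>x\<bar>"] d by simp
    moreover have "card (Y x) \<le> card {y \<in> {-\<bar>x\<bar>..\<bar>x\<bar>}. d dvd y}"
      by (intro card_mono) (auto simp: Y_def)
    ultimately have "real (card (Y x)) \<le> 3 * \<bar>x\<bar> / d" by linarith
    then show "real (card (Y x)) / \<bar>x\<bar> \<le> 3 / d"
      using x by (simp add: X_def divide_le_eq field_simps)
  qed
  also have "\<dots> = 3 / d * real (card X)" by simp
  also have "\<dots> \<le> 3 / d * (3 * N / d)"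
  proof (rule mult_left_mono)
    have "card X \<le> card {x \<in> {-N..N}. d dvd x}" by (intro card_mono) (auto simp: X_def)
    then show "real (card X) \<le> 3 * N / d" using card_multiples_le[OF d] by linarith
  qed (use d in simp)
  also have "\<dots> = 9 * N / d ^ 2" by (simp add: power2_eq_square)
  finally show ?thesis .
qed

lemma sum_inverse_height_multiples_le:
  fixes d N :: int
  assumes d: "1 \<le> d" "d \<le> N"
  shows "(\<Sum>v\<in>{v \<in> grid N. v \<noteq> (0, 0) \<and> d dvd fst v \<and> d dvd snd v}. 1 / real_of_int (height v))
           \<le> 18 * N / d ^ 2"
proof -
  let ?f = "\<lambda>v. 1 / real_of_int (height v)"
  define H where "H = {v \<in> grid N. fst v \<noteq> 0 \<and> \<bar>snd v\<bar> \<le> \<bar>fst v\<bar> \<and> d dvd fst v \<and> d dvd snd v}"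
  have "{v \<in> grid N. v \<noteq> (0, 0) \<and> d dvd fst v \<and> d dvd snd v} \<subseteq> H \<union> prod.swap ` H"
  proof
    fix v assume v: "v \<in> {v \<in> grid N. v \<noteq> (0, 0) \<and> d dvd fst v \<and> d dvd snd v}"
    show "v \<in> H \<union> prod.swap ` H"
    proof (cases "\<bar>snd v\<bar> \<le> \<bar>fst v\<bar>")
      case True
      then show ?thesis using v by (auto simp: H_def prod_eq_iff)
    next
      case False
      then have "prod.swap v \<in> H" using v by (auto simp: H_def)
      then show ?thesis by (metis UnI2 image_eqI swap_swap)
    qed
  qed
  then have "sum ?f {v \<in> grid N. v \<noteq> (0, 0) \<and> d dvd fst v \<and> d dvd snd v} \<le> sum ?f (H \<union> prod.swap ` H)"
    by (intro sum_mono2) (auto simp: H_def)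
  also have "\<dots> \<le> sum ?f H + sum ?f (prod.swap ` H)"
    by (simp add: sum_Un H_def sum_nonneg)
  also have "sum ?f (prod.swap ` H) = sum ?f H"
    by (simp add: sum.reindex)
  also have "sum ?f H = (\<Sum>v\<in>H. 1 / real_of_int \<bar>fst v\<bar>)"
    by (intro sum.cong) (auto simp: H_def height_def)
  also have "\<dots> \<le> 9 * N / d ^ 2"
    unfolding H_def by (rule sum_inverse_abs_fst_le[OF d])
  finally show ?thesis by simp
qed

definition recip_divisor_sum :: "int \<Rightarrow> int \<Rightarrow> real" where
  "recip_divisor_sum N t = (\<Sum>d\<in>{d \<in> {1..N}. d dvd t}. 1 / real_of_int d)"

lemma recip_divisor_sum_nonneg [simp]: "0 \<le> recip_divisor_sum N t"
  unfolding recip_divisor_sum_def by (rule sum_nonneg) simp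

lemma recip_divisor_sum_uminus [simp]: "recip_divisor_sum N (- t) = recip_divisor_sum N t"
  by (simp add: recip_divisor_sum_def)

lemma sum_gcd_over_height_le:
  fixes N t :: int
  assumes N: "1 \<le> N"
  shows "(\<Sum>v\<in>{v \<in> grid N. v \<noteq> (0, 0) \<and> gcd (fst v) (snd v) dvd t}.
           real_of_int (gcd (fst v) (snd v)) / real_of_int (height v))
         \<le> 18 * N * recip_divisor_sum N t"
proof -
  let ?G = "{v \<in> grid N. v \<noteq> (0, 0) \<and> gcd (fst v) (snd v) dvd t}"
  let ?D = "{d \<in> {1..N}. d dvd t}"
  let ?V = "\<lambda>d. {v \<in> grid N. v \<noteq> (0, 0) \<and> d dvd fst v \<and> d dvd snd v}"
  let ?h = "\<lambda>d v. if d dvd fst v \<and> d dvd snd v then real_of_int d / real_of_int (height v) else 0"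
  have "real_of_int (gcd (fst v) (snd v)) / real_of_int (height v) \<le> (\<Sum>d\<in>?D. ?h d v)"
    if v: "v \<in> ?G" for v
  proof -
    have "gcd (fst v) (snd v) \<in> ?D"
      using v gcd_le_height[of v] height_le[of v N] by (auto simp: prod_eq_iff int_one_le_iff_zero_less)
    then have "?h (gcd (fst v) (snd v)) v \<le> (\<Sum>d\<in>?D. ?h d v)"
      by (rule member_le_sum) auto
    then show ?thesis by simp
  qed
  then have "(\<Sum>v\<in>?G. real_of_int (gcd (fst v) (snd v)) / real_of_int (height v))
      \<le> (\<Sum>v\<in>?G. \<Sum>d\<in>?D. ?h d v)"
    by (rule sum_mono)
  also have "\<dots> = (\<Sum>d\<in>?D. \<Sum>v\<in>?G. ?h d v)"
    by (rule sum.swap)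
  also have "\<dots> \<le> (\<Sum>d\<in>?D. d * (\<Sum>v\<in>?V d. 1 / real_of_int (height v)))"
  proof (rule sum_mono)
    fix d assume "d \<in> ?D"
    have "(\<Sum>v\<in>?G. ?h d v) = (\<Sum>v\<in>{v \<in> ?G. d dvd fst v \<and> d dvd snd v}. d / real_of_int (height v))"
      by (simp add: sum.inter_filter, intro sum.cong) auto
    also have "\<dots> \<le> (\<Sum>v\<in>?V d. d / real_of_int (height v))"
      using \<open>d \<in> ?D\<close> by (intro sum_mono2) auto
    finally show "(\<Sum>v\<in>?G. ?h d v) \<le> d * (\<Sum>v\<in>?V d. 1 / real_of_int (height v))"
      by (simp add: sum_distrib_left)
  qed
  also have "\<dots> \<le> (\<Sum>d\<in>?D. d * (18 * N / d ^ 2))"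
    by (intro sum_mono mult_left_mono sum_inverse_height_multiples_le) auto
  also have "\<dots> = 18 * N * recip_divisor_sum N t"
    by (simp add: recip_divisor_sum_def sum_distrib_left power2_eq_square)
  finally show ?thesis .
qed

definition pairs_with_det :: "int \<Rightarrow> int \<Rightarrow> ((int \<times> int) \<times> (int \<times> int)) set" where
  "pairs_with_det N t = (SIGMA v:grid N. {w \<in> grid N. det2 v w = t})"

lemma finite_pairs_with_det [simp]: "finite (pairs_with_det N t)"
  by (simp add: pairs_with_det_def)

lemma card_pairs_with_det_le:
  fixes N t :: int
  assumes N: "1 \<le> N"
  shows "real (card (pairs_with_det N t)) \<le> 36 * real_of_int N ^ 2 * (1 + recip_divisor_sum N t)"
proof -
  let ?c = "\<lambda>v. real (card {w \<in> grid N. det2 v w = t})"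
  let ?G = "{v \<in> grid N. v \<noteq> (0, 0) \<and> gcd (fst v) (snd v) dvd t}"
  let ?g = "\<lambda>v. real_of_int (gcd (fst v) (snd v)) / real_of_int (height v)"
  have "(0, 0) \<in> grid N" using N by (simp add: grid_def)
  then have split: "real (card (pairs_with_det N t)) = ?c (0, 0) + (\<Sum>v\<in>grid N - {(0, 0)}. ?c v)"
    by (simp add: pairs_with_det_def card_SigmaI sum.remove)
  have "(\<Sum>v\<in>grid N - {(0, 0)}. ?c v) = (\<Sum>v\<in>?G. ?c v)"
    by (rule sum.mono_neutral_right) (auto simp: gcd_dvd_det2)
  also have "\<dots> \<le> (\<Sum>v\<in>?G. 1 + 2 * real_of_int N * ?g v)"
    using card_det2_le N by (intro sum_mono) (simp add: algebra_simps)
  also have "\<dots> = real (card ?G) + 2 * real_of_int N * (\<Sum>v\<in>?G. ?g v)"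
    by (simp add: sum.distrib sum_distrib_left)
  also have "\<dots> \<le> real (card (grid N)) + 2 * real_of_int N * (18 * N * recip_divisor_sum N t)"
    using sum_gcd_over_height_le[OF N, of t] N
    by (intro add_mono mult_left_mono) (auto intro: card_mono)
  also have "\<dots> = real (card (grid N)) + 36 * real_of_int N ^ 2 * recip_divisor_sum N t"
    by (simp add: power2_eq_square)
  finally have "(\<Sum>v\<in>grid N - {(0, 0)}. ?c v)
      \<le> real (card (grid N)) + 36 * real_of_int N ^ 2 * recip_divisor_sum N t" .
  moreover have "?c (0, 0) \<le> real (card (grid N))" by (auto intro: card_mono)
  moreover have "real (card (grid N)) \<le> 9 * real_of_int N ^ 2" by (rule card_grid_le[OF N])
  ultimately show ?thesis using split by (simp add: algebra_simps)
qed

section \<open>The third moment of the reciprocal divisor sum\<close>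

lemma sum_cube:
  fixes f :: "'a \<Rightarrow> 'b::comm_semiring_1"
  shows "(\<Sum>x\<in>A. f x) ^ 3 = (\<Sum>(x, y, z)\<in>A \<times> A \<times> A. f x * f y * f z)"
proof -
  have "(\<Sum>x\<in>A. f x) ^ 3 = (\<Sum>x\<in>A. f x) * ((\<Sum>y\<in>A. f y) * (\<Sum>z\<in>A. f z))"
    by (simp add: power3_eq_cube mult.assoc)
  also have "\<dots> = (\<Sum>x\<in>A. \<Sum>y\<in>A. \<Sum>z\<in>A. f x * f y * f z)"
    by (simp add: sum_distrib_left sum_distrib_right mult_ac)
  also have "\<dots> = (\<Sum>(x, y, z)\<in>A \<times> A \<times> A. f x * f y * f z)"
    by (simp add: sum.cartesian_product)
  finally show ?thesis .
qed

lemma inverse_mult_max_le_powr: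
  fixes a b c :: real
  assumes "0 < a" "0 < b" "0 < c"
  shows "1 / (a * b * c * max a (max b c)) \<le> (a * b * c) powr (-4/3)"
proof -
  define P where "P = a * b * c"
  define M where "M = max a (max b c)"
  have P: "0 < P" using assms by (simp add: P_def)
  have "a \<le> M" "b \<le> M" "c \<le> M" by (simp_all add: M_def)
  then have "P \<le> M * M * M" using assms unfolding P_def by (intro mult_mono) auto
  then have "P powr (1/3) \<le> (M powr 3) powr (1/3)"
    using P \<open>a \<le> M\<close> assms by (intro powr_mono2) (auto simp: power3_eq_cube)
  also have "\<dots> = M" using \<open>a \<le> M\<close> assms by (simp only: powr_powr) simp
  finally have root_le: "P powr (1/3) \<le> M" .
  have M: "0 < M" using \<open>a \<le> M\<close> assms by simp
  have "P powr (-4/3) = P powr (- (4/3))" by simp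
  also have "\<dots> = 1 / P powr (1 + 1/3)" by (simp add: powr_minus_divide)
  also have "\<dots> = 1 / (P * P powr (1/3))" using P by (simp only: powr_add) simp
  also have "1 / (P * M) \<le> \<dots>"
    using P M root_le by (intro divide_left_mono mult_left_mono mult_pos_pos) auto
  finally show ?thesis by (simp add: P_def M_def)
qed

lemma card_common_multiples_le:
  fixes a b c X :: int
  assumes "1 \<le> a" "1 \<le> b" "1 \<le> c" "a \<le> X" "b \<le> X" "c \<le> X"
  shows "real (card {t \<in> {-X..X}. a dvd t \<and> b dvd t \<and> c dvd t}) / (a * b * c)
           \<le> 3 * X * real_of_int (a * b * c) powr (-4/3)"
proof -
  let ?C = "{t \<in> {-X..X}. a dvd t \<and> b dvd t \<and> c dvd t}"
  define M where "M = max (real_of_int a) (max (real_of_int b) (real_of_int c))"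
  have "real (card ?C) * m \<le> 3 * X" if "m \<in> {a, b, c}" for m
  proof -
    have m: "1 \<le> m" "m \<le> X" using that assms by auto
    have "card ?C \<le> card {t \<in> {-X..X}. m dvd t}" using that by (intro card_mono) auto
    then have "real (card ?C) \<le> 3 * X / m" using card_multiples_le[OF m] by linarith
    then show ?thesis using m by (simp add: le_divide_eq)
  qed
  moreover have "M \<in> real_of_int ` {a, b, c}" by (auto simp: M_def max_def)
  ultimately have card_M: "real (card ?C) * M \<le> 3 * X" by auto
  have M: "0 < M" using assms by (simp add: M_def)
  have pos: "0 < real_of_int a * b * c" using assms by simp
  have "real (card ?C) / (a * b * c) = real (card ?C) * M * (1 / (real_of_int a * b * c * M))"
    using M pos by (simp add: field_simps)
  also have "\<dots> \<le> 3 * X * (1 / (real_of_int a * b * c * M))"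
    using card_M M pos by (intro mult_right_mono) auto
  also have "\<dots> \<le> 3 * X * (real_of_int a * b * c) powr (-4/3)"
    using inverse_mult_max_le_powr[of a b c] assms by (intro mult_left_mono) (auto simp: M_def)
  finally show ?thesis by simp
qed

lemma sum_recip_divisor_sum_cube_le:
  fixes N X :: int
  assumes "1 \<le> N" "N \<le> X"
  shows "(\<Sum>t\<in>{-X..X}. recip_divisor_sum N t ^ 3)
           \<le> 3 * X * (\<Sum>d\<in>{1..N}. real_of_int d powr (-4/3)) ^ 3"
proof -
  let ?D = "{1..N}"
  let ?f = "\<lambda>t d. if d dvd t then 1 / real_of_int d else 0"
  let ?q = "\<lambda>d. real_of_int d powr (-4/3)"
  have "recip_divisor_sum N t = (\<Sum>d\<in>?D. ?f t d)" for t
    unfolding recip_divisor_sum_def by (rule sum.inter_filter) simp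
  then have "(\<Sum>t\<in>{-X..X}. recip_divisor_sum N t ^ 3)
      = (\<Sum>t\<in>{-X..X}. \<Sum>(a, b, c)\<in>?D \<times> ?D \<times> ?D. ?f t a * ?f t b * ?f t c)"
    by (simp only: sum_cube)
  also have "\<dots> = (\<Sum>(a, b, c)\<in>?D \<times> ?D \<times> ?D. \<Sum>t\<in>{-X..X}. ?f t a * ?f t b * ?f t c)"
    by (subst sum.swap) (simp add: case_prod_unfold)
  also have "\<dots> \<le> (\<Sum>(a, b, c)\<in>?D \<times> ?D \<times> ?D. 3 * X * (?q a * ?q b * ?q c))"
  proof (rule sum_mono)
    fix p assume "p \<in> ?D \<times> ?D \<times> ?D"
    then obtain a b c where p: "p = (a, b, c)" and abc: "a \<in> ?D" "b \<in> ?D" "c \<in> ?D" by auto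
    let ?C = "{t \<in> {-X..X}. a dvd t \<and> b dvd t \<and> c dvd t}"
    have "(\<Sum>t\<in>{-X..X}. ?f t a * ?f t b * ?f t c) = (\<Sum>t\<in>?C. 1 / real_of_int (a * b * c))"
      by (subst sum.inter_filter) (auto intro!: sum.cong)
    also have "\<dots> = real (card ?C) / (a * b * c)" by simp
    also have "\<dots> \<le> 3 * X * real_of_int (a * b * c) powr (-4/3)"
      using abc assms by (intro card_common_multiples_le) auto
    also have "\<dots> = 3 * X * (?q a * ?q b * ?q c)"
      using abc by (simp add: powr_mult)
    finally show "(case p of (a, b, c) \<Rightarrow> \<Sum>t\<in>{-X..X}. ?f t a * ?f t b * ?f t c)
        \<le> (case p of (a, b, c) \<Rightarrow> 3 * X * (?q a * ?q b * ?q c))" by (simp add: p)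
  qed
  also have "\<dots> = 3 * X * (\<Sum>d\<in>?D. ?q d) ^ 3"
    by (simp add: sum_cube sum_distrib_left case_prod_unfold mult.assoc)
  finally show ?thesis .
qed

text \<open>The term n = 0 vanishes because 0 powr a = 0.\<close>

definition zeta_4_3 :: real where
  "zeta_4_3 = (\<Sum>n. real n powr (-4/3))"

lemma summable_zeta_4_3: "summable (\<lambda>n. real n powr (-4/3))"
  by (simp add: summable_real_powr_iff)

lemma zeta_4_3_nonneg: "0 \<le> zeta_4_3"
  unfolding zeta_4_3_def by (rule suminf_nonneg[OF summable_zeta_4_3]) simp

lemma sum_powr_le_zeta_4_3: "(\<Sum>d\<in>{1..N}. real_of_int d powr (-4/3)) \<le> zeta_4_3"
proof -
  have "{1..N} = int ` {1..nat N}" by (cases "N \<ge> 0") (simp_all add: image_int_atLeastAtMost)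
  then have "(\<Sum>d\<in>{1..N}. real_of_int d powr (-4/3)) = (\<Sum>n\<in>{1..nat N}. real n powr (-4/3))"
    by (simp add: sum.reindex)
  also have "\<dots> \<le> zeta_4_3"
    unfolding zeta_4_3_def by (rule sum_le_suminf[OF summable_zeta_4_3]) auto
  finally show ?thesis .
qed

lemma cube_add_le:
  fixes a b :: real
  assumes "0 \<le> a" "0 \<le> b"
  shows "(a + b) ^ 3 \<le> 4 * (a ^ 3 + b ^ 3)"
proof -
  have "0 \<le> 3 * (a + b) * (a - b) ^ 2" using assms by simp
  then show ?thesis by (simp add: power2_eq_square power3_eq_cube algebra_simps)
qed

lemma card_pairs_with_det_product_le:
  fixes N t :: int
  assumes N: "1 \<le> N"
  shows "real (card (pairs_with_det N t)) ^ 2 * real (card (pairs_with_det N (- t)))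
         \<le> 4 * (36 * real_of_int N ^ 2) ^ 3 * (1 + recip_divisor_sum N t ^ 3)"
proof -
  define K where "K = 36 * real_of_int N ^ 2"
  have K: "0 \<le> K" by (simp add: K_def)
  have "real (card (pairs_with_det N t)) \<le> K * (1 + recip_divisor_sum N t)"
    "real (card (pairs_with_det N (- t))) \<le> K * (1 + recip_divisor_sum N t)"
    using card_pairs_with_det_le[OF N, of t] card_pairs_with_det_le[OF N, of "- t"]
    by (simp_all add: K_def)
  then have "real (card (pairs_with_det N t)) ^ 2 * real (card (pairs_with_det N (- t)))
      \<le> (K * (1 + recip_divisor_sum N t)) ^ 2 * (K * (1 + recip_divisor_sum N t))"
    by (intro mult_mono power_mono) auto
  also have "\<dots> = K ^ 3 * (1 + recip_divisor_sum N t) ^ 3"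
    by (simp add: power2_eq_square power3_eq_cube)
  also have "\<dots> \<le> K ^ 3 * (4 * (1 ^ 3 + recip_divisor_sum N t ^ 3))"
    using K by (intro mult_left_mono cube_add_le) auto
  finally show ?thesis by (simp add: K_def algebra_simps)
qed

lemma sum_card_pairs_with_det_le:
  fixes N :: int
  assumes N: "1 \<le> N"
  shows "(\<Sum>t\<in>{-(2 * N^2)..2 * N^2}.
           real (card (pairs_with_det N t)) ^ 2 * real (card (pairs_with_det N (- t))))
         \<le> 36 ^ 3 * (20 + 24 * zeta_4_3 ^ 3) * real_of_int N ^ 8"
proof -
  let ?T = "{-(2 * N^2)..2 * N^2}"
  let ?F = "recip_divisor_sum N"
  define K where "K = 36 * real_of_int N ^ 2"
  have "(\<Sum>t\<in>?T. real (card (pairs_with_det N t)) ^ 2 * real (card (pairs_with_det N (- t))))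
      \<le> (\<Sum>t\<in>?T. 4 * K ^ 3 * (1 + ?F t ^ 3))"
    unfolding K_def by (intro sum_mono card_pairs_with_det_product_le[OF N])
  also have "\<dots> = 4 * K ^ 3 * (real (card ?T) + (\<Sum>t\<in>?T. ?F t ^ 3))"
    by (simp add: sum.distrib flip: sum_distrib_left)
  also have "\<dots> \<le> 4 * K ^ 3 * (5 * real_of_int N ^ 2 + 3 * (2 * real_of_int N ^ 2) * zeta_4_3 ^ 3)"
  proof (intro mult_left_mono add_mono)
    have "real (card ?T) = 4 * real_of_int N ^ 2 + 1" by simp
    moreover have "1 \<le> real_of_int N ^ 2" using N by simp
    ultimately show "real (card ?T) \<le> 5 * real_of_int N ^ 2" by simp
    have X: "N \<le> 2 * N ^ 2" using N by (simp add: power2_eq_square)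
    have "(\<Sum>t\<in>?T. ?F t ^ 3) \<le> 3 * (2 * N ^ 2) * (\<Sum>d\<in>{1..N}. real_of_int d powr (-4/3)) ^ 3"
      using sum_recip_divisor_sum_cube_le[OF N X] by simp
    also have "\<dots> \<le> 3 * (2 * N ^ 2) * zeta_4_3 ^ 3"
      by (intro mult_left_mono power_mono sum_powr_le_zeta_4_3 sum_nonneg) auto
    finally show "(\<Sum>t\<in>?T. ?F t ^ 3) \<le> 3 * (2 * real_of_int N ^ 2) * zeta_4_3 ^ 3" by simp
  qed (simp add: K_def)
  also have "\<dots> = 36 ^ 3 * (20 + 24 * zeta_4_3 ^ 3) * real_of_int N ^ 8"
    by (simp add: K_def algebra_simps power_mult_distrib flip: power_mult power_add)
  finally show ?thesis .
qed

section \<open>Reduction to determinants of off-diagonal pairs\<close>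

lemma exhaust_6:
  fixes x :: 6
  shows "x = 1 \<or> x = 2 \<or> x = 3 \<or> x = 4 \<or> x = 5 \<or> x = 6"
proof (induct x)
  case (of_int z)
  then have "z = 0 \<or> z = 1 \<or> z = 2 \<or> z = 3 \<or> z = 4 \<or> z = 5" by fastforce
  then show ?case by auto
qed

lemma commuting_entry:
  fixes A B :: "'a::semiring_1^3^3"
  assumes "A ** B = B ** A"
  shows "A$i$1 * B$1$j + A$i$2 * B$2$j + A$i$3 * B$3$j = B$i$1 * A$1$j + B$i$2 * A$2$j + B$i$3 * A$3$j"
proof -
  have "(A ** B)$i$j = (B ** A)$i$j" using assms by simp
  then show ?thesis by (simp add: matrix_matrix_mult_def sum_3)
qed

definition diag_diffs :: "int^3^3 \<Rightarrow> int^3^3 \<Rightarrow> real^4" where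
  "diag_diffs A B = vector [A$1$1 - A$2$2, B$1$1 - B$2$2, A$1$1 - A$3$3, B$1$1 - B$3$3]"

text \<open>For k = 1, ..., 6, row k of the identity Mmat A B *v diag_diffs A B = Mmat_rhs A B is
  the vanishing of entry (1,2), (2,1), (1,3), (3,1), (3,2), (2,3) of AB - BA, respectively.\<close>

definition Mmat_rhs :: "int^3^3 \<Rightarrow> int^3^3 \<Rightarrow> real^6" where
  "Mmat_rhs A B = vector [A$1$3 * B$3$2 - B$1$3 * A$3$2, A$2$3 * B$3$1 - B$2$3 * A$3$1,
                          A$1$2 * B$2$3 - B$1$2 * A$2$3, A$3$2 * B$2$1 - B$3$2 * A$2$1,
                          B$3$1 * A$1$2 - A$3$1 * B$1$2, B$2$1 * A$1$3 - A$2$1 * B$1$3]"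

lemma Mmat_mult_diag_diffs:
  assumes "A ** B = B ** A"
  shows "Mmat A B *v diag_diffs A B = Mmat_rhs A B"
proof -
  have c: "real_of_int (A$i$1 * B$1$j + A$i$2 * B$2$j + A$i$3 * B$3$j)
         = real_of_int (B$i$1 * A$1$j + B$i$2 * A$2$j + B$i$3 * A$3$j)" for i j
    using commuting_entry[OF assms] by presburger
  show ?thesis
    unfolding vec_eq_iff
  proof
    fix i :: 6
    show "(Mmat A B *v diag_diffs A B) $ i = Mmat_rhs A B $ i"
      using exhaust_6[of i] c[of 1 2] c[of 2 1] c[of 1 3] c[of 3 1] c[of 3 2] c[of 2 3]
      by (auto simp: Mmat_def diag_diffs_def Mmat_rhs_def matrix_vector_mult_def sum_4 vector_def
          ent_def algebra_simps)
  qed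
qed

lemma det2_commuting:
  fixes A B :: "int^3^3"
  assumes "A ** B = B ** A"
  shows "det2 (A$2$3, B$2$3) (A$3$2, B$3$2) = det2 (A$1$2, B$1$2) (A$2$1, B$2$1)"
    and "det2 (A$1$3, B$1$3) (A$3$1, B$3$1) = - det2 (A$1$2, B$1$2) (A$2$1, B$2$1)"
  using commuting_entry[OF assms, of 2 2] commuting_entry[OF assms, of 1 1]
  by (simp_all add: det2_def algebra_simps)

text \<open>In the numbering of the paper: (a1, b1), ((a2, b2), (a4, b4)), ((a6, b6), (a8, b8)),
  ((a3, b3), (a7, b7)).\<close>

fun skeleton :: "(int^3^3) \<times> (int^3^3) \<Rightarrow> (int \<times> int) \<times> ((int \<times> int) \<times> (int \<times> int))
    \<times> ((int \<times> int) \<times> (int \<times> int)) \<times> ((int \<times> int) \<times> (int \<times> int))" where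
  "skeleton (A, B) = ((A$1$1, B$1$1), ((A$1$2, B$1$2), (A$2$1, B$2$1)),
     ((A$2$3, B$2$3), (A$3$2, B$3$2)), ((A$1$3, B$1$3), (A$3$1, B$3$1)))"

lemma inj_on_skeleton_S4: "inj_on skeleton (S4 N)"
proof (rule inj_onI, clarify)
  fix A B A' B' assume S: "(A, B) \<in> S4 N" "(A', B') \<in> S4 N"
    and e: "skeleton (A, B) = skeleton (A', B')"
  have comm: "A ** B = B ** A" "A' ** B' = B' ** A'" and rk: "rank (Mmat A B) = 4"
    using S by (auto simp: S4_def)
  have E: "A$1$1 = A'$1$1" "B$1$1 = B'$1$1" "A$1$2 = A'$1$2" "B$1$2 = B'$1$2"
    "A$2$1 = A'$2$1" "B$2$1 = B'$2$1" "A$2$3 = A'$2$3" "B$2$3 = B'$2$3"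
    "A$3$2 = A'$3$2" "B$3$2 = B'$3$2" "A$1$3 = A'$1$3" "B$1$3 = B'$1$3"
    "A$3$1 = A'$3$1" "B$3$1 = B'$3$1"
    using e by simp_all
  have "Mmat A' B' = Mmat A B" "Mmat_rhs A' B' = Mmat_rhs A B"
    using E by (simp_all add: Mmat_def ent_def Mmat_rhs_def)
  then have "Mmat A B *v diag_diffs A' B' = Mmat A B *v diag_diffs A B"
    using Mmat_mult_diag_diffs comm by metis
  moreover have "inj ((*v) (Mmat A B))" using rk full_rank_injective[of "Mmat A B"] by simp
  ultimately have "diag_diffs A' B' = diag_diffs A B" by (simp add: inj_eq)
  then have "A$2$2 = A'$2$2 \<and> B$2$2 = B'$2$2 \<and> A$3$3 = A'$3$3 \<and> B$3$3 = B'$3$3"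
    using E by (simp add: diag_diffs_def vec_eq_iff forall_4 vector_def)
  then show "A = A' \<and> B = B'"
    using E by (simp add: vec_eq_iff forall_3)
qed

lemma abs_mult_le_square:
  fixes x y N :: int
  assumes "\<bar>x\<bar> \<le> N" "\<bar>y\<bar> \<le> N"
  shows "\<bar>x * y\<bar> \<le> N ^ 2"
  using assms by (simp add: abs_mult power2_eq_square mult_mono')

lemma skeleton_S4_subset:
  "skeleton ` S4 N \<subseteq> grid N \<times> (\<Union>t\<in>{-(2 * N^2)..2 * N^2}.
     pairs_with_det N t \<times> pairs_with_det N t \<times> pairs_with_det N (- t))"
proof
  fix x assume "x \<in> skeleton ` S4 N"
  then obtain A B where x: "x = skeleton (A, B)" and "(A, B) \<in> S4 N" by auto
  then have bound: "\<bar>A$i$j\<bar> \<le> N" "\<bar>B$i$j\<bar> \<le> N" and comm: "A ** B = B ** A" for i j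
    by (auto simp: S4_def)
  define t where "t = det2 (A$1$2, B$1$2) (A$2$1, B$2$1)"
  have "\<bar>A$1$2 * B$2$1\<bar> \<le> N ^ 2" "\<bar>B$1$2 * A$2$1\<bar> \<le> N ^ 2"
    using bound by (simp_all add: abs_mult_le_square)
  then have "t \<in> {-(2 * N^2)..2 * N^2}" by (auto simp: t_def det2_def)
  moreover have "(A$i$j, B$i$j) \<in> grid N" for i j
    using bound[of i j] by (auto simp: grid_def abs_le_iff)
  ultimately show "x \<in> grid N \<times> (\<Union>t\<in>{-(2 * N^2)..2 * N^2}.
     pairs_with_det N t \<times> pairs_with_det N t \<times> pairs_with_det N (- t))"
    using det2_commuting[OF comm] by (auto simp: x pairs_with_det_def t_def)
qed

lemma card_S4_le_sum:
  "real (card (S4 N)) \<le> real (card (grid N)) * (\<Sum>t\<in>{-(2 * N^2)..2 * N^2}.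
     real (card (pairs_with_det N t)) ^ 2 * real (card (pairs_with_det N (- t))))"
proof -
  let ?U = "\<Union>t\<in>{-(2 * N^2)..2 * N^2}. pairs_with_det N t \<times> pairs_with_det N t \<times> pairs_with_det N (- t)"
  have "card (S4 N) \<le> card (grid N \<times> ?U)"
    using inj_on_skeleton_S4 skeleton_S4_subset by (rule card_inj_on_le) simp
  also have "\<dots> = card (grid N) * card ?U" by (rule card_cartesian_product)
  also have "card ?U \<le> (\<Sum>t\<in>{-(2 * N^2)..2 * N^2}.
      card (pairs_with_det N t \<times> pairs_with_det N t \<times> pairs_with_det N (- t)))"
    by (rule card_UN_le) simp
  finally have "card (S4 N) \<le> card (grid N) * (\<Sum>t\<in>{-(2 * N^2)..2 * N^2}.
      card (pairs_with_det N t) ^ 2 * card (pairs_with_det N (- t)))"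
    by (simp add: card_cartesian_product power2_eq_square mult.assoc)
  then show ?thesis by (metis (no_types, lifting) of_nat_le_iff of_nat_mult of_nat_power of_nat_sum sum.cong)
qed

theorem lemma4p2:
  "\<exists>C::real. C > 0 \<and> (\<forall>N::int. N \<ge> 1 \<longrightarrow> real (card (S4 N)) \<le> C * real_of_int N ^ 10)"
proof (intro exI conjI allI impI)
  show "0 < 9 * 36 ^ 3 * (20 + 24 * zeta_4_3 ^ 3)"
    using zeta_4_3_nonneg by (simp add: add_pos_nonneg)
next
  fix N :: int assume N: "N \<ge> 1"
  have "real (card (S4 N)) \<le> real (card (grid N)) * (\<Sum>t\<in>{-(2 * N^2)..2 * N^2}.
      real (card (pairs_with_det N t)) ^ 2 * real (card (pairs_with_det N (- t))))"
    by (rule card_S4_le_sum)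
  also have "\<dots> \<le> (9 * real_of_int N ^ 2) * (36 ^ 3 * (20 + 24 * zeta_4_3 ^ 3) * real_of_int N ^ 8)"
    using N by (intro mult_mono card_grid_le sum_card_pairs_with_det_le) (auto intro: sum_nonneg)
  also have "\<dots> = 9 * 36 ^ 3 * (20 + 24 * zeta_4_3 ^ 3) * real_of_int N ^ 10"
    by (simp add: algebra_simps flip: power_add)
  finally show "real (card (S4 N)) \<le> 9 * 36 ^ 3 * (20 + 24 * zeta_4_3 ^ 3) * real_of_int N ^ 10" .
qed

end
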